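(* Let $\mathbb{F}$ be a field of characteristic different from $2$ and let $\mathcal{J}Spin_n(\mathbb{F})$ be the spin factor defined in the context. Then every 2-local inner derivation on $\mathcal{J}Spin_n(\mathbb{F})$ is a derivation.
   Context: $\mathcal{J}Spin_n(\mathbb{F})=\mathbb{F}\mathbf{1}\oplus V$, where $V$ is an $n$-dimensional $\mathbb{F}$-vector space with a symmetric bilinear form $f$ and a basis $\xi_1,\dots,\xi_n$ with $f(\xi_i,\xi_j)=0$ for $i\ne j$ and $f(\xi_i,\xi_i)=1$; the product is $(\alpha\mathbf{1}+x)\cdot(\beta\mathbf{1}+y)=(\alpha\beta+f(x,y))\mathbf{1}+(\beta x+\alpha y)$ for $\alpha,\beta\in\mathbb{F}$, $x,y\in V$. Thus with $s_i=\xi_i$ one has the basis $\{\mathbf{1},s_1,\dots,s_n\}$ with $s_i s_i=\mathbf{1}$, $s_is_j=0$ ($i\neq j$), $s_k\mathbf{1}=s_k$. A derivation is a linear map $D$ with $D(xy)=D(x)y+xD(y)$. An inner derivation is a map of the form $x\mapsto\sum_{k=1}^m\big(a_k(b_kx)-b_k(a_kx)\big)$ with $a_k,b_k$ in the algebra. A 2-local inner derivation is a map $\Delta$ (not assumed linear) such that for every $x,y$ there is an inner derivation $D$ with $\Delta(x)=D(x)$, $\Delta(y)=D(y)$. *)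

theory Defs
  imports Main "HOL-Library.Function_Algebras"
begin

text \<open>The spin factor JSpin_n(F) = F 1 (+) V, dim V = n, with orthonormal basis
  xi_1..xi_n indexed by the finite type 'n.  An element is a coordinate function
  u :: 'n option => 'a, where u None is the coefficient of the unit 1 and
  u (Some i) is the coefficient of xi_i.  Addition is pointwise (Function_Algebras).\<close>

type_synonym ('a, 'n) jspin = "'n option \<Rightarrow> 'a"

definition jscale :: "'a::field \<Rightarrow> ('a, 'n) jspin \<Rightarrow> ('a, 'n) jspin" where
  "jscale c u = (\<lambda>k. c * u k)"

definition jform :: "('a::field, 'n::finite) jspin \<Rightarrow> ('a, 'n) jspin \<Rightarrow> 'a" where
  "jform u v = (\<Sum>i\<in>UNIV. u (Some i) * v (Some i))"

text \<open>(alpha 1 + x)(beta 1 + y) = (alpha beta + f(x,y)) 1 + (beta x + alpha y).\<close>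
definition jmult :: "('a::field, 'n::finite) jspin \<Rightarrow> ('a, 'n) jspin \<Rightarrow> ('a, 'n) jspin" where
  "jmult u v = (\<lambda>k. case k of
       None \<Rightarrow> u None * v None + jform u v
     | Some i \<Rightarrow> v None * u (Some i) + u None * v (Some i))"

definition jlinear :: "(('a::field, 'n::finite) jspin \<Rightarrow> ('a, 'n) jspin) \<Rightarrow> bool" where
  "jlinear D \<longleftrightarrow> (\<forall>u v. D (u + v) = D u + D v) \<and> (\<forall>c u. D (jscale c u) = jscale c (D u))"

definition jderivation :: "(('a::field, 'n::finite) jspin \<Rightarrow> ('a, 'n) jspin) \<Rightarrow> bool" where
  "jderivation D \<longleftrightarrow> jlinear D \<and> (\<forall>x y. D (jmult x y) = jmult (D x) y + jmult x (D y))"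

definition jinner_derivation :: "(('a::field, 'n::finite) jspin \<Rightarrow> ('a, 'n) jspin) \<Rightarrow> bool" where
  "jinner_derivation D \<longleftrightarrow> (\<exists>(m::nat) a b. \<forall>x.
      D x = (\<Sum>k<m. jmult (a k) (jmult (b k) x) - jmult (b k) (jmult (a k) x)))"

definition jtwo_local_inner_derivation :: "(('a::field, 'n::finite) jspin \<Rightarrow> ('a, 'n) jspin) \<Rightarrow> bool" where
  "jtwo_local_inner_derivation \<Delta> \<longleftrightarrow>
     (\<forall>x y. \<exists>D. jinner_derivation D \<and> \<Delta> x = D x \<and> \<Delta> y = D y)"

end

theory Submission
  imports Defs
begin

text \<open>An inner derivation is a sum of maps z \<mapsto> a(bz) - b(az), and in the spin factor each of
  these kills the unit coordinate and sends z to f(b,z) a - f(a,z) b on V, so it is skew with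
  respect to f. Both properties involve at most two points, so a 2-local inner derivation
  \<Delta> inherits them. Skewness against the basis vector \<xi>_i gives the coordinate formula
  \<Delta>(u)_i = -f(u, \<Delta> \<xi>_i), which is linear in u; together with \<Delta>(u)_0 = 0 this makes the
  Leibniz rule a direct computation. No assumption on the characteristic is needed.\<close>

lemma sum_fun_apply: "(sum f A) x = (\<Sum>k\<in>A. f k x)"
  by (induction A rule: infinite_finite_induct) auto

definition jcomm :: "('a::field, 'n::finite) jspin \<Rightarrow> ('a, 'n) jspin \<Rightarrow> ('a, 'n) jspin \<Rightarrow> ('a, 'n) jspin"
  where "jcomm a b z = jmult a (jmult b z) - jmult b (jmult a z)"

definition jbasis :: "'n \<Rightarrow> ('a::field, 'n) jspin"
  where "jbasis i = (\<lambda>k. if k = Some i then 1 else 0)"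

lemma jinner_derivation_iff_jcomm:
  "jinner_derivation D \<longleftrightarrow> (\<exists>(m::nat) a b. \<forall>x. D x = (\<Sum>k<m. jcomm (a k) (b k) x))"
  unfolding jinner_derivation_def jcomm_def ..

lemma jform_commute: "jform u w = jform w u"
  unfolding jform_def by (simp add: mult.commute)

lemma jform_linear_left:
  assumes "\<And>i. z (Some i) = p * a (Some i) + q * b (Some i)"
  shows "jform z w = p * jform a w + q * jform b w"
  unfolding jform_def assms
  by (simp add: algebra_simps sum.distrib sum_distrib_left)

lemma jform_scale_left: "jform (\<lambda>k. c * u k) w = c * jform u w"
  unfolding jform_def by (simp add: sum_distrib_left mult.assoc)

lemma jform_sum_left: "jform (sum f A) w = (\<Sum>k\<in>A. jform (f k) w)"
  unfolding jform_def sum_fun_apply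
  by (simp add: sum_distrib_right sum.swap[of _ A])

lemma jform_jbasis_right: "jform v (jbasis i) = v (Some i)"
proof -
  have "(\<Sum>j\<in>UNIV. v (Some j) * jbasis i (Some j)) = (\<Sum>j\<in>UNIV. if j = i then v (Some j) else 0)"
    unfolding jbasis_def by (rule sum.cong) auto
  then show ?thesis unfolding jform_def by simp
qed

lemma jform_jmult_left: "jform (jmult x y) w = y None * jform x w + x None * jform y w"
  by (rule jform_linear_left) (simp add: jmult_def)

lemma jcomm_None: "jcomm a b z None = 0"
proof -
  have "jcomm a b z None
      = a None * (b None * z None + jform b z) + jform (jmult b z) a
        - (b None * (a None * z None + jform a z) + jform (jmult a z) b)"
    by (simp add: jcomm_def jmult_def jform_commute[of a] jform_commute[of b])
  also have "\<dots> = 0"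
    unfolding jform_jmult_left jform_commute[of z a] jform_commute[of z b] jform_commute[of b a]
    by (simp add: algebra_simps)
  finally show ?thesis .
qed

lemma jcomm_Some: "jcomm a b z (Some i) = jform b z * a (Some i) + (- jform a z) * b (Some i)"
  unfolding jcomm_def jmult_def by (simp add: algebra_simps)

lemma jform_jcomm_skew: "jform (jcomm a b u) w + jform u (jcomm a b w) = 0"
proof -
  have uw: "jform (jcomm a b u) w = jform b u * jform a w + (- jform a u) * jform b w"
    by (rule jform_linear_left) (rule jcomm_Some)
  have wu: "jform (jcomm a b w) u = jform b w * jform a u + (- jform a w) * jform b u"
    by (rule jform_linear_left) (rule jcomm_Some)
  show ?thesis
    unfolding jform_commute[of u "jcomm a b w"] uw wu by (simp add: algebra_simps)
qed

lemma jinner_derivation_None: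
  assumes "jinner_derivation D"
  shows "D u None = 0"
proof -
  obtain m :: nat and a b where D: "\<And>x. D x = (\<Sum>k<m. jcomm (a k) (b k) x)"
    using assms unfolding jinner_derivation_iff_jcomm by blast
  show ?thesis unfolding D sum_fun_apply jcomm_None by simp
qed

lemma jinner_derivation_skew:
  assumes "jinner_derivation D"
  shows "jform (D u) w + jform u (D w) = 0"
proof -
  obtain m :: nat and a b where D: "\<And>x. D x = (\<Sum>k<m. jcomm (a k) (b k) x)"
    using assms unfolding jinner_derivation_iff_jcomm by blast
  have "jform (D u) w + jform u (D w)
      = (\<Sum>k<m. jform (jcomm (a k) (b k) u) w + jform u (jcomm (a k) (b k) w))"
    unfolding D jform_commute[of u] jform_sum_left by (simp add: sum.distrib)
  also have "\<dots> = 0" by (simp add: jform_jcomm_skew)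
  finally show ?thesis .
qed

lemma skew_Some_coordinate:
  assumes "\<And>u w. jform (D u) w + jform u (D w) = 0"
  shows "D u (Some i) = - jform u (D (jbasis i))"
  using assms[of u "jbasis i"] by (simp add: jform_jbasis_right eq_neg_iff_add_eq_0)

lemma jlinear_if_skew:
  assumes unit: "\<And>u. D u None = 0"
    and skew: "\<And>u w. jform (D u) w + jform u (D w) = 0"
  shows "jlinear D"
  unfolding jlinear_def
proof (intro conjI allI ext)
  fix u v k
  show "D (u + v) k = (D u + D v) k"
    by (cases k) (simp_all add: unit skew_Some_coordinate[OF skew] jform_linear_left[of "u + v" 1 u 1 v])
next
  fix c u k
  show "D (jscale c u) k = jscale c (D u) k"
    by (cases k) (simp_all add: unit skew_Some_coordinate[OF skew] jform_scale_left jscale_def)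
qed

lemma jderivation_if_skew:
  assumes unit: "\<And>u. D u None = 0"
    and skew: "\<And>u w. jform (D u) w + jform u (D w) = 0"
  shows "jderivation D"
proof -
  have "D (jmult x y) k = (jmult (D x) y + jmult x (D y)) k" for x y k
  proof (cases k)
    case None
    then show ?thesis using skew[of x y] by (simp add: jmult_def unit)
  next
    case (Some i)
    have "D (jmult x y) (Some i) = - (y None * jform x (D (jbasis i)) + x None * jform y (D (jbasis i)))"
      by (simp only: skew_Some_coordinate[OF skew] jform_jmult_left)
    also have "\<dots> = y None * D x (Some i) + x None * D y (Some i)"
      by (simp add: skew_Some_coordinate[OF skew] algebra_simps)
    also have "\<dots> = (jmult (D x) y + jmult x (D y)) (Some i)"
      by (simp add: jmult_def unit)
    finally show ?thesis using Some by simp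
  qed
  then show ?thesis
    unfolding jderivation_def using jlinear_if_skew[OF assms] by blast
qed

theorem theorem3p2:
  fixes \<Delta> :: "('a::field, 'n::finite) jspin \<Rightarrow> ('a, 'n) jspin"
  assumes "CHAR('a) \<noteq> 2"
    and "jtwo_local_inner_derivation \<Delta>"
  shows "jderivation \<Delta>"
proof (rule jderivation_if_skew)
  fix u w
  obtain D where "jinner_derivation D" "\<Delta> u = D u" "\<Delta> w = D w"
    using assms(2) unfolding jtwo_local_inner_derivation_def by blast
  then show "\<Delta> u None = 0" "jform (\<Delta> u) w + jform u (\<Delta> w) = 0"
    by (simp_all add: jinner_derivation_None jinner_derivation_skew)
qed

end
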